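(* Let $n\ge 1$ and let $\mathbb{X}:=\{x\in[0,1]^n \mid \sum_{i=1}^n x_i=1\}$ be the standard simplex. For $p\in\mathbb{R}^n$ let $\mathscr{M}(p):=\arg\max_{x\in\mathbb{X}} p^\top x$. Fix any $q\in\mathbb{R}^n$ and any $\bar{x}\in\mathscr{M}(q)$. Then the only vector $x\in\mathbb{X}$ satisfying $$x\in\mathscr{M}(\bar{x}-x+q)$$ is $x=\bar{x}$.
   Context: $\mathscr{M}:\mathbb{R}^n\to 2^{\mathbb{X}}$ is the best response map, i.e. $\mathscr{M}(p)$ is the set of maximizers of the linear function $x\mapsto p^\top x$ over the simplex $\mathbb{X}$. *)

theory Defs
  imports "HOL-Analysis.Analysis"
begin

definition std_simplex :: "(real ^ 'n) set" where
  "std_simplex = {x. (\<forall>i. 0 \<le> x $ i \<and> x $ i \<le> 1) \<and> (\<Sum>i\<in>UNIV. x $ i) = 1}"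

definition best_response :: "real ^ 'n \<Rightarrow> (real ^ 'n) set" where
  "best_response p = {x \<in> std_simplex. \<forall>y \<in> std_simplex. p \<bullet> y \<le> p \<bullet> x}"

end

theory Submission
  imports Defs
begin

text \<open>The best response map is the normal cone map of the simplex, hence monotone. If
  \<open>x \<in> M(xbar - x + q)\<close> and \<open>xbar \<in> M(q)\<close>, monotonicity applied to the difference
  \<open>x - xbar\<close> of the two price vectors gives \<open>0 \<le> -\<parallel>xbar - x\<parallel>\<^sup>2\<close>, so \<open>x = xbar\<close>.\<close>

lemma maximizer_monotone:
  fixes p p' a b :: "'a::real_inner"
  assumes "a \<in> S" "b \<in> S"
    and "\<forall>y\<in>S. p \<bullet> y \<le> p \<bullet> a" and "\<forall>y\<in>S. p' \<bullet> y \<le> p' \<bullet> b"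
  shows "0 \<le> (p - p') \<bullet> (a - b)"
proof -
  have "p \<bullet> b \<le> p \<bullet> a" "p' \<bullet> a \<le> p' \<bullet> b"
    using assms by auto
  then show ?thesis
    by (simp add: inner_diff_left inner_diff_right)
qed

lemma best_response_monotone:
  assumes "x \<in> best_response p" "y \<in> best_response p'"
  shows "0 \<le> (p - p') \<bullet> (x - y)"
  using assms by (intro maximizer_monotone[of x std_simplex y]) (auto simp: best_response_def)

theorem lemma1:
  fixes q xbar :: "real ^ 'n"
  assumes "xbar \<in> best_response q"
  shows "{x \<in> std_simplex. x \<in> best_response (xbar - x + q)} = {xbar}"
proof (intro equalityI subsetI)
  fix x
  assume "x \<in> {x \<in> std_simplex. x \<in> best_response (xbar - x + q)}"
  then have "0 \<le> (q - (xbar - x + q)) \<bullet> (xbar - x)"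
    using best_response_monotone[OF assms, of x "xbar - x + q"] by blast
  also have "\<dots> = - ((xbar - x) \<bullet> (xbar - x))"
    by (simp add: algebra_simps)
  finally have "\<not> 0 < (xbar - x) \<bullet> (xbar - x)"
    by linarith
  then show "x \<in> {xbar}"
    unfolding inner_gt_zero_iff by simp
next
  show "x \<in> {x \<in> std_simplex. x \<in> best_response (xbar - x + q)}" if "x \<in> {xbar}" for x
    using assms that by (simp add: best_response_def)
qed

end
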